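(* Let $G$ be a graph with a tree-representation $\{T(v)\}$ in which every subtree $T(v)$ is a downward path in the host tree. Then any bottom-up enumeration order $v_1,\dots,v_n$ of the vertices is a strong elimination order of $G$.
   Context: Graphs are finite and simple; $N[v]$ denotes the closed neighbourhood of $v$. A host tree $T$ is a rooted tree whose arcs carry positive integer weights; the depth of a node is the sum of arc weights on its path to the root. A subtree is a connected node set of $T$; its root is its node of smallest depth. A downward path is the node set of the path from a node to one of its descendants. A tree-representation of $G$ assigns to each vertex $v$ a subtree $T(v)$ of $T$ such that for distinct $v,w$, $(v,w)$ is an edge iff $T(v)\cap T(w)\neq\emptyset$. A bottom-up enumeration order is an ordering $v_1,\dots,v_n$ of the vertices in which the depths of the roots of $T(v_1),\dots,T(v_n)$ are non-increasing (ties broken arbitrarily). A strong elimination order is an ordering $v_1,\dots,v_n$ of the vertices such that for all $i,j,k,\ell$: if $i<j$, $k<\ell$, $v_k,v_\ell\in N[v_i]$ and $v_k\in N[v_j]$, then $v_\ell\in N[v_j]$. *)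

theory Defs
  imports Main
begin

definition simple_graph :: "'v set \<Rightarrow> ('v \<Rightarrow> 'v \<Rightarrow> bool) \<Rightarrow> bool" where
  "simple_graph V E \<longleftrightarrow> finite V \<and>
     (\<forall>u v. E u v \<longrightarrow> u \<in> V \<and> v \<in> V \<and> u \<noteq> v \<and> E v u)"

definition closed_nbhd :: "'v set \<Rightarrow> ('v \<Rightarrow> 'v \<Rightarrow> bool) \<Rightarrow> 'v \<Rightarrow> 'v set" where
  "closed_nbhd V E v = insert v {u \<in> V. E v u}"

text \<open>Host tree: finite node set N, root r, parent function par (with par r = r
  as a convention); every node reaches the root by following parents.
  Arc from x to par x (x \<noteq> r) has weight w x.\<close>
definition rooted_tree :: "'n set \<Rightarrow> 'n \<Rightarrow> ('n \<Rightarrow> 'n) \<Rightarrow> bool" where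
  "rooted_tree N r par \<longleftrightarrow> finite N \<and> r \<in> N \<and> par r = r \<and>
     (\<forall>x\<in>N. par x \<in> N) \<and> (\<forall>x\<in>N. \<exists>k. (par ^^ k) x = r)"

definition weighted_tree :: "'n set \<Rightarrow> 'n \<Rightarrow> ('n \<Rightarrow> 'n) \<Rightarrow> ('n \<Rightarrow> nat) \<Rightarrow> bool" where
  "weighted_tree N r par w \<longleftrightarrow> rooted_tree N r par \<and> (\<forall>x\<in>N. x \<noteq> r \<longrightarrow> w x > 0)"

definition tree_depth :: "'n \<Rightarrow> ('n \<Rightarrow> 'n) \<Rightarrow> ('n \<Rightarrow> nat) \<Rightarrow> 'n \<Rightarrow> nat" where
  "tree_depth r par w x = (\<Sum>i < (LEAST k. (par ^^ k) x = r). w ((par ^^ i) x))"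

definition tree_adj :: "'n set \<Rightarrow> 'n \<Rightarrow> ('n \<Rightarrow> 'n) \<Rightarrow> 'n \<Rightarrow> 'n \<Rightarrow> bool" where
  "tree_adj N r par x y \<longleftrightarrow> x \<in> N \<and> y \<in> N \<and>
     ((x \<noteq> r \<and> par x = y) \<or> (y \<noteq> r \<and> par y = x))"

definition subtree :: "'n set \<Rightarrow> 'n \<Rightarrow> ('n \<Rightarrow> 'n) \<Rightarrow> 'n set \<Rightarrow> bool" where
  "subtree N r par S \<longleftrightarrow> S \<noteq> {} \<and> S \<subseteq> N \<and>
     (\<forall>x\<in>S. \<forall>y\<in>S. (\<lambda>a b. a \<in> S \<and> b \<in> S \<and> tree_adj N r par a b)\<^sup>*\<^sup>* x y)"

definition subtree_root_depth :: "'n \<Rightarrow> ('n \<Rightarrow> 'n) \<Rightarrow> ('n \<Rightarrow> nat) \<Rightarrow> 'n set \<Rightarrow> nat" where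
  "subtree_root_depth r par w S = Min (tree_depth r par w ` S)"

text \<open>Downward path: node set of the path from a node a to a descendant b
  (b reaches a after k parent steps).\<close>
definition downward_path :: "'n set \<Rightarrow> ('n \<Rightarrow> 'n) \<Rightarrow> 'n set \<Rightarrow> bool" where
  "downward_path N par S \<longleftrightarrow> (\<exists>b\<in>N. \<exists>k::nat. S = {(par ^^ i) b | i. i \<le> k})"

definition tree_representation ::
  "'v set \<Rightarrow> ('v \<Rightarrow> 'v \<Rightarrow> bool) \<Rightarrow> 'n set \<Rightarrow> 'n \<Rightarrow> ('n \<Rightarrow> 'n) \<Rightarrow> ('v \<Rightarrow> 'n set) \<Rightarrow> bool" where
  "tree_representation V E N r par T \<longleftrightarrow>
     (\<forall>v\<in>V. subtree N r par (T v)) \<and>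
     (\<forall>v\<in>V. \<forall>u\<in>V. v \<noteq> u \<longrightarrow> (E v u \<longleftrightarrow> T v \<inter> T u \<noteq> {}))"

definition vertex_ordering :: "'v set \<Rightarrow> 'v list \<Rightarrow> bool" where
  "vertex_ordering V vs \<longleftrightarrow> distinct vs \<and> set vs = V"

definition bottom_up_order ::
  "'n \<Rightarrow> ('n \<Rightarrow> 'n) \<Rightarrow> ('n \<Rightarrow> nat) \<Rightarrow> ('v \<Rightarrow> 'n set) \<Rightarrow> 'v set \<Rightarrow> 'v list \<Rightarrow> bool" where
  "bottom_up_order r par w T V vs \<longleftrightarrow> vertex_ordering V vs \<and>
     (\<forall>i j. i < j \<and> j < length vs \<longrightarrow>
        subtree_root_depth r par w (T (vs ! j)) \<le> subtree_root_depth r par w (T (vs ! i)))"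

definition strong_elimination_order :: "'v set \<Rightarrow> ('v \<Rightarrow> 'v \<Rightarrow> bool) \<Rightarrow> 'v list \<Rightarrow> bool" where
  "strong_elimination_order V E vs \<longleftrightarrow> vertex_ordering V vs \<and>
     (\<forall>i j k l. i < length vs \<and> j < length vs \<and> k < length vs \<and> l < length vs \<and>
        i < j \<and> k < l \<and>
        vs ! k \<in> closed_nbhd V E (vs ! i) \<and> vs ! l \<in> closed_nbhd V E (vs ! i) \<and>
        vs ! k \<in> closed_nbhd V E (vs ! j) \<longrightarrow> vs ! l \<in> closed_nbhd V E (vs ! j))"

end

theory Submission
  imports Defs
begin

text \<open>
  In a rooted tree the ancestors of a node form a chain ordered by depth, so a
  downward path is a segment of the ancestor order, and whenever two such
  segments meet, the deeper of their two tops lies on both.  Let \<open>P\<^sub>i, P\<^sub>j, P\<^sub>k, P\<^sub>l\<close>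
  be the paths of \<open>v\<^sub>i, v\<^sub>j, v\<^sub>k, v\<^sub>l\<close> in the definition of a strong elimination
  order; the tops of \<open>P\<^sub>j\<close> and \<open>P\<^sub>l\<close> are no deeper than those of \<open>P\<^sub>i\<close> and \<open>P\<^sub>k\<close>.
  The configuration is symmetric under swapping \<open>i\<close> with \<open>k\<close> and \<open>j\<close> with \<open>l\<close>,
  so let the top \<open>t\<^sub>k\<close> of \<open>P\<^sub>k\<close> be at least as deep as that of \<open>P\<^sub>i\<close>.  Then \<open>t\<^sub>k\<close>
  lies on \<open>P\<^sub>i\<close> and on \<open>P\<^sub>j\<close>.  The deeper of the tops of \<open>P\<^sub>i\<close> and \<open>P\<^sub>l\<close> lies on
  both; it is an ancestor of \<open>t\<^sub>k\<close> no shallower than the top of \<open>P\<^sub>j\<close>, hence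
  lies on \<open>P\<^sub>j\<close> too.
\<close>

locale forest_order =
  fixes anc :: "'n \<Rightarrow> 'n \<Rightarrow> bool" and depth :: "'n \<Rightarrow> nat"
  assumes anc_refl: "anc x x"
    and anc_trans: "anc x y \<Longrightarrow> anc y z \<Longrightarrow> anc x z"
    and anc_chain: "anc x z \<Longrightarrow> anc y z \<Longrightarrow> anc x y \<or> anc y x"
    and depth_less: "anc x y \<Longrightarrow> x \<noteq> y \<Longrightarrow> depth x < depth y"
begin

lemma depth_mono: "anc x y \<Longrightarrow> depth x \<le> depth y"
  using depth_less by fastforce

lemma anc_antisym: "anc x y \<Longrightarrow> anc y x \<Longrightarrow> x = y"
  using depth_less less_asym by blast

lemma anc_if_depth_le:
  assumes "anc x z" "anc y z" "depth x \<le> depth y"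
  shows "anc x y"
  using anc_chain[OF assms(1,2)] assms(3) depth_less anc_refl by fastforce

definition segment :: "'n \<Rightarrow> 'n \<Rightarrow> 'n set" where
  "segment t b = {z. anc t z \<and> anc z b}"

lemma mem_segment_iff [simp]: "z \<in> segment t b \<longleftrightarrow> anc t z \<and> anc z b"
  by (simp add: segment_def)

lemma Min_depth_segment:
  assumes "finite (segment t b)" "anc t b"
  shows "Min (depth ` segment t b) = depth t"
  using assms by (intro Min_eqI) (auto simp: anc_refl depth_mono)

lemma segment_mem_if_below:
  assumes "c \<in> segment t b" "anc s c" "depth t \<le> depth s"
  shows "s \<in> segment t b"
proof -
  have "anc t s"
    using assms anc_if_depth_le[of t c s] by simp
  moreover have "anc s b"
    using assms anc_trans[of s c b] by simp
  ultimately show ?thesis by simp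
qed

lemma top_mem_segment_if_deeper:
  assumes "segment t b \<inter> segment t' b' \<noteq> {}" "depth t' \<le> depth t"
  shows "t \<in> segment t' b'"
proof -
  obtain z where "z \<in> segment t b" "z \<in> segment t' b'"
    using assms(1) by blast
  then show ?thesis
    using segment_mem_if_below[of z t' b' t] assms(2) by simp
qed

lemma top_mem_segment: "segment t b \<noteq> {} \<Longrightarrow> t \<in> segment t b"
  using anc_refl anc_trans by auto

lemma segment_inter_deeper_top:
  assumes "segment t b \<inter> segment t' b' \<noteq> {}"
  obtains s where "s \<in> segment t b" "s \<in> segment t' b'"
    and "depth s = max (depth t) (depth t')"
proof (cases "depth t' \<le> depth t")
  case True
  have "t \<in> segment t b" "t \<in> segment t' b'"
    using assms top_mem_segment top_mem_segment_if_deeper[OF assms True] by auto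
  with True that show thesis by (simp add: max_def)
next
  case False
  have "t' \<in> segment t' b'" "t' \<in> segment t b"
    using assms top_mem_segment top_mem_segment_if_deeper[of t' b' t b] False
    by (auto simp: Int_commute)
  with False that show thesis by (simp add: max_def)
qed

lemma segment_strong_elimination_oriented:
  assumes ik: "segment t_i b_i \<inter> segment t_k b_k \<noteq> {}"
    and il: "segment t_i b_i \<inter> segment t_l b_l \<noteq> {}"
    and jk: "segment t_j b_j \<inter> segment t_k b_k \<noteq> {}"
    and ji: "depth t_j \<le> depth t_i" and lk: "depth t_l \<le> depth t_k"
    and ik_depth: "depth t_i \<le> depth t_k"
  shows "segment t_j b_j \<inter> segment t_l b_l \<noteq> {}"
proof -
  have k_in_i: "t_k \<in> segment t_i b_i"
    using top_mem_segment_if_deeper[of t_k b_k t_i b_i] ik ik_depth by (simp add: Int_commute)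
  have k_in_j: "t_k \<in> segment t_j b_j"
    using top_mem_segment_if_deeper[of t_k b_k t_j b_j] jk ji ik_depth by (simp add: Int_commute)
  obtain s where s_i: "s \<in> segment t_i b_i" and s_l: "s \<in> segment t_l b_l"
    and depth_s: "depth s = max (depth t_i) (depth t_l)"
    using segment_inter_deeper_top[OF il] .
  have "anc s t_k"
    using s_i k_in_i depth_s lk ik_depth anc_if_depth_le[of s b_i t_k] by simp
  then have "s \<in> segment t_j b_j"
    using segment_mem_if_below[OF k_in_j] depth_s ji by simp
  with s_l show ?thesis by blast
qed

lemma segment_strong_elimination:
  assumes "segment t_i b_i \<inter> segment t_k b_k \<noteq> {}"
    and "segment t_i b_i \<inter> segment t_l b_l \<noteq> {}"
    and "segment t_j b_j \<inter> segment t_k b_k \<noteq> {}"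
    and "depth t_j \<le> depth t_i" and "depth t_l \<le> depth t_k"
  shows "segment t_j b_j \<inter> segment t_l b_l \<noteq> {}"
proof (cases "depth t_i \<le> depth t_k")
  case True
  then show ?thesis using assms segment_strong_elimination_oriented by blast
next
  case False
  then show ?thesis
    using assms segment_strong_elimination_oriented[of t_k b_k t_i b_i t_j b_j t_l b_l]
    by (simp add: Int_commute)
qed

lemma strong_elimination_order_segment_graph:
  assumes order: "vertex_ordering V vs"
    and meet: "\<And>u v. u \<in> V \<Longrightarrow> v \<in> V \<Longrightarrow>
      u \<in> closed_nbhd V E v \<longleftrightarrow> segment (t v) (b v) \<inter> segment (t u) (b u) \<noteq> {}"
    and top_depth: "\<And>m n. m < n \<Longrightarrow> n < length vs \<Longrightarrow> depth (t (vs ! n)) \<le> depth (t (vs ! m))"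
  shows "strong_elimination_order V E vs"
  unfolding strong_elimination_order_def
proof (intro conjI order allI impI, elim conjE)
  fix i j k l
  assume "i < length vs" "j < length vs" "k < length vs" "l < length vs" "i < j" "k < l"
    and "vs ! k \<in> closed_nbhd V E (vs ! i)" "vs ! l \<in> closed_nbhd V E (vs ! i)"
    and "vs ! k \<in> closed_nbhd V E (vs ! j)"
  moreover have "vs ! m \<in> V" if "m < length vs" for m
    using order that by (auto simp: vertex_ordering_def)
  ultimately show "vs ! l \<in> closed_nbhd V E (vs ! j)"
    using segment_strong_elimination[of "t (vs ! i)" "b (vs ! i)" "t (vs ! k)" "b (vs ! k)"
        "t (vs ! l)" "b (vs ! l)" "t (vs ! j)" "b (vs ! j)"]
      meet[of "vs ! k" "vs ! i"] meet[of "vs ! l" "vs ! i"] meet[of "vs ! k" "vs ! j"]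
      meet[of "vs ! l" "vs ! j"] top_depth[of i j] top_depth[of k l]
    by blast
qed

end

text \<open>Off \<open>N\<close>, where \<open>tree_depth\<close> is junk, only the reflexive pairs are kept.\<close>

definition tree_anc :: "'n set \<Rightarrow> ('n \<Rightarrow> 'n) \<Rightarrow> 'n \<Rightarrow> 'n \<Rightarrow> bool" where
  "tree_anc N par x y \<longleftrightarrow> x = y \<or> y \<in> N \<and> (\<exists>n. (par ^^ n) y = x)"

lemma funpow_mem_closed: "\<forall>x\<in>N. f x \<in> N \<Longrightarrow> x \<in> N \<Longrightarrow> (f ^^ n) x \<in> N"
  by (induction n) auto

lemma tree_depth_parent:
  assumes "rooted_tree N r par" "x \<in> N" "x \<noteq> r"
  shows "tree_depth r par w x = w x + tree_depth r par w (par x)"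
proof -
  obtain k where "(par ^^ k) x = r"
    using assms(1,2) by (auto simp: rooted_tree_def)
  then have "(LEAST k. (par ^^ k) x = r) = Suc (LEAST k. (par ^^ k) (par x) = r)"
    using assms(3) by (subst Least_Suc) (auto simp: funpow_swap1)
  then show ?thesis
    unfolding tree_depth_def by (simp only: sum.lessThan_Suc_shift) (simp add: funpow_swap1)
qed

lemma tree_depth_funpow_less:
  assumes wt: "weighted_tree N r par w"
  shows "x \<in> N \<Longrightarrow> (par ^^ n) x \<noteq> x \<Longrightarrow> tree_depth r par w ((par ^^ n) x) < tree_depth r par w x"
proof (induction n arbitrary: x)
  case 0
  then show ?case by simp
next
  case (Suc n)
  have rt: "rooted_tree N r par" and pos: "\<forall>x\<in>N. x \<noteq> r \<longrightarrow> w x > 0"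
    using wt by (auto simp: weighted_tree_def)
  have "par x \<noteq> x"
  proof
    assume "par x = x"
    then have "(par ^^ m) x = x" for m
      by (induction m) auto
    with Suc.prems(2) show False by blast
  qed
  then have "x \<noteq> r" and "par x \<in> N"
    using rt Suc.prems(1) by (auto simp: rooted_tree_def)
  then have "tree_depth r par w (par x) < tree_depth r par w x"
    using tree_depth_parent[OF rt Suc.prems(1)] pos Suc.prems(1) by simp
  moreover have "(par ^^ Suc n) x = (par ^^ n) (par x)"
    by (simp add: funpow_swap1)
  ultimately show ?case
    using Suc.IH[OF \<open>par x \<in> N\<close>] by (cases "(par ^^ n) (par x) = par x") auto
qed

lemma funpow_le_diff:
  assumes "m \<le> n" shows "(f ^^ n) x = (f ^^ (n - m)) ((f ^^ m) x)"
  using assms by (metis funpow_add comp_apply le_add_diff_inverse2)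

lemma forest_order_tree_anc:
  assumes wt: "weighted_tree N r par w"
  shows "forest_order (tree_anc N par) (tree_depth r par w)"
proof
  have closed: "\<forall>x\<in>N. par x \<in> N"
    using wt by (simp add: weighted_tree_def rooted_tree_def)
  fix x y z
  show "tree_anc N par x x"
    by (simp add: tree_anc_def)
  show "tree_anc N par x z" if "tree_anc N par x y" "tree_anc N par y z"
    using that unfolding tree_anc_def by (metis funpow_add comp_apply)
  show "tree_anc N par x y \<or> tree_anc N par y x"
    if xz: "tree_anc N par x z" and yz: "tree_anc N par y z"
  proof -
    consider "x = z" | "y = z" | a b where "z \<in> N" "x = (par ^^ a) z" "y = (par ^^ b) z"
      using xz yz unfolding tree_anc_def by blast
    then show ?thesis
    proof cases
      case 3
      then show ?thesis
        using funpow_mem_closed[OF closed] funpow_le_diff[of a b par z] funpow_le_diff[of b a par z]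
        unfolding tree_anc_def by (metis nat_le_linear)
    qed (use xz yz in auto)
  qed
  show "tree_depth r par w x < tree_depth r par w y" if "tree_anc N par x y" "x \<noteq> y"
    using that tree_depth_funpow_less[OF wt] by (auto simp: tree_anc_def)
qed

lemma downward_path_segment:
  assumes wt: "weighted_tree N r par w" and "downward_path N par S"
  shows "\<exists>t b. S = forest_order.segment (tree_anc N par) t b \<and>
    subtree_root_depth r par w S = tree_depth r par w t"
proof -
  interpret forest_order "tree_anc N par" "tree_depth r par w"
    using wt by (rule forest_order_tree_anc)
  have closed: "\<forall>x\<in>N. par x \<in> N"
    using wt by (simp add: weighted_tree_def rooted_tree_def)
  obtain b k where b: "b \<in> N" and S: "S = {(par ^^ i) b | i. i \<le> k}"
    using assms(2) by (auto simp: downward_path_def)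
  let ?t = "(par ^^ k) b"
  have "S = segment ?t b"
  proof (intro set_eqI iffI)
    fix z assume "z \<in> S"
    then obtain i where "i \<le> k" "z = (par ^^ i) b"
      using S by auto
    then show "z \<in> segment ?t b"
      using funpow_le_diff[of i k par b] funpow_mem_closed[OF closed b] b
      by (auto simp: tree_anc_def)
  next
    fix z assume z: "z \<in> segment ?t b"
    then obtain m where m: "z = (par ^^ m) b"
      by (auto simp: tree_anc_def) (metis funpow_0)
    show "z \<in> S"
    proof (cases "m \<le> k")
      case True
      with m S show ?thesis by auto
    next
      case False
      then have "tree_anc N par z ?t"
        using m funpow_le_diff[of k m par b] funpow_mem_closed[OF closed b]
        by (auto simp: tree_anc_def)
      with z have "z = ?t"
        using anc_antisym by simp
      with S show ?thesis by auto
    qed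
  qed
  moreover have "finite S"
    unfolding S by (simp add: setcompr_eq_image)
  moreover have "tree_anc N par ?t b"
    using b by (auto simp: tree_anc_def)
  ultimately have "subtree_root_depth r par w S = tree_depth r par w ?t"
    using Min_depth_segment by (simp add: subtree_root_depth_def)
  with \<open>S = segment ?t b\<close> show ?thesis by (intro exI conjI)
qed

lemma closed_nbhd_iff_subtrees_meet:
  assumes "tree_representation V E N r par T" "u \<in> V" "v \<in> V"
  shows "u \<in> closed_nbhd V E v \<longleftrightarrow> T u \<inter> T v \<noteq> {}"
proof (cases "u = v")
  case True
  have "T v \<noteq> {}"
    using assms by (auto simp: tree_representation_def subtree_def)
  with True show ?thesis by (simp add: closed_nbhd_def)
next
  case False
  then show ?thesis
    using assms by (auto simp: tree_representation_def closed_nbhd_def)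
qed

theorem corollary1:
  fixes V :: "'v set" and E :: "'v \<Rightarrow> 'v \<Rightarrow> bool"
    and N :: "'n set" and r :: 'n and par :: "'n \<Rightarrow> 'n" and w :: "'n \<Rightarrow> nat"
    and T :: "'v \<Rightarrow> 'n set" and vs :: "'v list"
  assumes "simple_graph V E"
    and "weighted_tree N r par w"
    and "tree_representation V E N r par T"
    and "\<forall>v\<in>V. downward_path N par (T v)"
    and "bottom_up_order r par w T V vs"
  shows "strong_elimination_order V E vs"
proof -
  interpret forest_order "tree_anc N par" "tree_depth r par w"
    using assms(2) by (rule forest_order_tree_anc)
  have "\<forall>v\<in>V. \<exists>t b. T v = segment t b \<and>
      subtree_root_depth r par w (T v) = tree_depth r par w t"
    using downward_path_segment[OF assms(2)] assms(4) by simp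
  then obtain t b where seg: "\<And>v. v \<in> V \<Longrightarrow> T v = segment (t v) (b v)"
    and root: "\<And>v. v \<in> V \<Longrightarrow> subtree_root_depth r par w (T v) = tree_depth r par w (t v)"
    by metis
  show ?thesis
  proof (rule strong_elimination_order_segment_graph)
    show order: "vertex_ordering V vs"
      using assms(5) by (simp add: bottom_up_order_def)
    show "u \<in> closed_nbhd V E v \<longleftrightarrow> segment (t v) (b v) \<inter> segment (t u) (b u) \<noteq> {}"
      if "u \<in> V" "v \<in> V" for u v
      using closed_nbhd_iff_subtrees_meet[OF assms(3) that] seg that by (simp add: Int_commute)
    show "tree_depth r par w (t (vs ! n)) \<le> tree_depth r par w (t (vs ! m))"
      if "m < n" "n < length vs" for m n
    proof -
      have "vs ! m \<in> V" "vs ! n \<in> V"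
        using order that by (auto simp: vertex_ordering_def)
      moreover have "subtree_root_depth r par w (T (vs ! n)) \<le> subtree_root_depth r par w (T (vs ! m))"
        using assms(5) that by (simp add: bottom_up_order_def)
      ultimately show ?thesis
        using root by simp
    qed
  qed
qed

end
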